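(* Let $\mathcal{G}=(V,L)$ be a finite connected undirected graph with monitor set $M$ and non-monitor set $N=V\setminus M$, $\sigma=|N|$, with measurement paths given by Controllable Simple-path Probing (CSP). A set $S\subseteq N$ is $\sigma$-identifiable if and only if each node in $S$ is adjacent to at least two monitors.
   Context: Under CSP, the measurement paths $P$ are all simple paths (no repeated nodes) in $\mathcal{G}$ between two distinct monitors. A failure set is any $F\subseteq N$; a path fails iff it traverses a node of $F$. $P_F$ is the set of paths in $P$ traversing a node of $F$; $F_1,F_2$ distinguishable iff $P_{F_1}\ne P_{F_2}$. $S\subseteq N$ is $k$-identifiable if any two failure sets $F_1,F_2$ with $|F_1|,|F_2|\le k$ and $F_1\cap S\ne F_2\cap S$ are distinguishable. *)

theory Defs
  imports Main
begin

definition finite_graph :: "'a set \<Rightarrow> ('a \<Rightarrow> 'a \<Rightarrow> bool) \<Rightarrow> bool" where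
  "finite_graph V E \<longleftrightarrow> finite V \<and> (\<forall>x y. E x y \<longrightarrow> x \<in> V \<and> y \<in> V)
     \<and> (\<forall>x y. E x y \<longrightarrow> E y x) \<and> (\<forall>x. \<not> E x x)"

definition connected_graph :: "'a set \<Rightarrow> ('a \<Rightarrow> 'a \<Rightarrow> bool) \<Rightarrow> bool" where
  "connected_graph V E \<longleftrightarrow> V \<noteq> {} \<and> (\<forall>x\<in>V. \<forall>y\<in>V. E\<^sup>*\<^sup>* x y)"

fun is_walk :: "('a \<Rightarrow> 'a \<Rightarrow> bool) \<Rightarrow> 'a list \<Rightarrow> bool" where
  "is_walk E [] = False"
| "is_walk E [x] = True"
| "is_walk E (x # y # xs) = (E x y \<and> is_walk E (y # xs))"

definition simple_path :: "'a set \<Rightarrow> ('a \<Rightarrow> 'a \<Rightarrow> bool) \<Rightarrow> 'a list \<Rightarrow> bool" where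
  "simple_path V E p \<longleftrightarrow> is_walk E p \<and> set p \<subseteq> V \<and> distinct p"

definition csp_paths :: "'a set \<Rightarrow> ('a \<Rightarrow> 'a \<Rightarrow> bool) \<Rightarrow> 'a set \<Rightarrow> 'a list set" where
  "csp_paths V E M = {p. simple_path V E p \<and> hd p \<in> M \<and> last p \<in> M \<and> hd p \<noteq> last p}"

definition failed_paths :: "'a list set \<Rightarrow> 'a set \<Rightarrow> 'a list set" where
  "failed_paths P F = {p \<in> P. set p \<inter> F \<noteq> {}}"

definition distinguishable :: "'a list set \<Rightarrow> 'a set \<Rightarrow> 'a set \<Rightarrow> bool" where
  "distinguishable P F1 F2 \<longleftrightarrow> failed_paths P F1 \<noteq> failed_paths P F2"

definition k_identifiable ::
  "'a set \<Rightarrow> ('a \<Rightarrow> 'a \<Rightarrow> bool) \<Rightarrow> 'a set \<Rightarrow> nat \<Rightarrow> 'a set \<Rightarrow> bool" where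
  "k_identifiable V E M k S \<longleftrightarrow>
     (\<forall>F1 F2. F1 \<subseteq> V - M \<longrightarrow> F2 \<subseteq> V - M \<longrightarrow> card F1 \<le> k \<longrightarrow> card F2 \<le> k \<longrightarrow>
        F1 \<inter> S \<noteq> F2 \<inter> S \<longrightarrow> distinguishable (csp_paths V E M) F1 F2)"

end

theory Submission
  imports Defs
begin

text \<open>A non-monitor v adjacent to two monitors m1, m2 is the only non-monitor on the
measurement path m1 v m2, so that path separates any two failure sets that differ on v.
Conversely, on a simple path between monitors an interior node v has two distinct
neighbours on the path, and if at most one neighbour of v is a monitor, one of them is a
non-monitor other than v. Hence failing all non-monitors and failing all non-monitors but v
fail exactly the same paths, and both sets have at most \<sigma> = |N| elements.\<close>

lemma is_walk_nth:
  "is_walk E p \<Longrightarrow> Suc i < length p \<Longrightarrow> E (p ! i) (p ! Suc i)"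
proof (induction E p arbitrary: i rule: is_walk.induct)
  case (3 E x y xs)
  then show ?case by (cases i) auto
qed auto

lemma distinguishable_sym: "distinguishable P F1 F2 \<longleftrightarrow> distinguishable P F2 F1"
  unfolding distinguishable_def by auto

lemma two_monitor_path_in_csp_paths:
  assumes "finite_graph V E" and "m1 \<in> M" "m2 \<in> M" "m1 \<noteq> m2" "E v m1" "E v m2"
  shows "[m1, v, m2] \<in> csp_paths V E M"
  using assms unfolding finite_graph_def csp_paths_def simple_path_def by auto

lemma distinguishable_if_two_monitor_neighbours:
  assumes fg: "finite_graph V E" and "v \<in> F1" "v \<notin> F2" "F2 \<inter> M = {}"
    and two: "2 \<le> card {m \<in> M. E v m}"
  shows "distinguishable (csp_paths V E M) F1 F2"
proof -
  obtain m1 m2 where m: "m1 \<in> M" "m2 \<in> M" "m1 \<noteq> m2" "E v m1" "E v m2"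
  proof -
    have "finite {m \<in> M. E v m}" using two by (metis card.infinite not_numeral_le_zero)
    with two have "\<not> (\<forall>a\<in>{m \<in> M. E v m}. \<forall>b\<in>{m \<in> M. E v m}. a = b)"
      using card_le_Suc0_iff_eq by fastforce
    then show thesis using that by blast
  qed
  let ?p = "[m1, v, m2]"
  have "?p \<in> csp_paths V E M" using two_monitor_path_in_csp_paths[OF fg m] .
  moreover have "set ?p \<inter> F1 \<noteq> {}" "set ?p \<inter> F2 = {}" using assms m by auto
  ultimately show ?thesis unfolding distinguishable_def failed_paths_def by blast
qed

lemma walk_interior_node_has_two_neighbours:
  assumes "is_walk E p" "distinct p" "0 < i" "Suc i < length p"
  obtains a b where "a \<in> set p" "b \<in> set p" "a \<noteq> b" "E a (p ! i)" "E (p ! i) b"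
proof
  show "p ! (i - 1) \<in> set p" "p ! Suc i \<in> set p" using assms by auto
  show "p ! (i - 1) \<noteq> p ! Suc i" using assms by (simp add: nth_eq_iff_index_eq)
  show "E (p ! (i - 1)) (p ! i)" using is_walk_nth[OF assms(1), of "i - 1"] assms by simp
  show "E (p ! i) (p ! Suc i)" using is_walk_nth[OF assms(1), of i] assms by simp
qed

lemma csp_path_meets_other_non_monitor:
  assumes fg: "finite_graph V E" and p: "p \<in> csp_paths V E M"
    and v: "v \<in> set p" "v \<notin> M" and few: "card {m \<in> M. E v m} < 2"
  shows "set p \<inter> (V - M - {v}) \<noteq> {}"
proof -
  have walk: "is_walk E p" and "set p \<subseteq> V" "distinct p" "hd p \<in> M" "last p \<in> M"
    using p unfolding csp_paths_def simple_path_def by auto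
  obtain i where i: "i < length p" "p ! i = v" using v(1) by (meson in_set_conv_nth)
  have "p \<noteq> []" using walk by auto
  then have "i \<noteq> 0" "i \<noteq> length p - 1"
    using i v(2) \<open>hd p \<in> M\<close> \<open>last p \<in> M\<close> by (metis hd_conv_nth, metis last_conv_nth)
  then have "0 < i" "Suc i < length p" using i(1) by auto
  then obtain a b where ab: "a \<in> set p" "b \<in> set p" "a \<noteq> b" "E a v" "E v b"
    using walk_interior_node_has_two_neighbours[OF walk \<open>distinct p\<close>] i(2) by metis
  have "finite {m \<in> M. E v m}"
    using fg unfolding finite_graph_def by (auto intro: finite_subset)
  then have "\<not> {a, b} \<subseteq> {m \<in> M. E v m}"
    using few ab(3) by (metis card_2_iff card_mono not_le)
  moreover have "E v a" "a \<noteq> v" "b \<noteq> v" using fg ab(4,5) unfolding finite_graph_def by auto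
  ultimately show ?thesis using ab(1,2,5) \<open>set p \<subseteq> V\<close> by auto
qed

lemma failed_paths_non_monitors_remove:
  assumes "finite_graph V E" "v \<notin> M" "card {m \<in> M. E v m} < 2"
  shows "failed_paths (csp_paths V E M) (V - M - {v}) = failed_paths (csp_paths V E M) (V - M)"
  using csp_path_meets_other_non_monitor[OF assms(1) _ _ assms(2,3)]
  unfolding failed_paths_def by blast

theorem proposition3:
  fixes V M S :: "'a set" and E :: "'a \<Rightarrow> 'a \<Rightarrow> bool"
  assumes "finite_graph V E" and "connected_graph V E"
    and "M \<subseteq> V" and "S \<subseteq> V - M"
  shows "k_identifiable V E M (card (V - M)) S \<longleftrightarrow>
         (\<forall>v\<in>S. card {m \<in> M. E v m} \<ge> 2)"
proof
  assume ident: "k_identifiable V E M (card (V - M)) S"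
  show "\<forall>v\<in>S. card {m \<in> M. E v m} \<ge> 2"
  proof (rule ccontr)
    assume "\<not> ?thesis"
    then obtain v where "v \<in> S" and few: "card {m \<in> M. E v m} < 2" by auto
    then have "v \<in> V - M" "(V - M) \<inter> S \<noteq> (V - M - {v}) \<inter> S" using assms(4) by auto
    then have "distinguishable (csp_paths V E M) (V - M) (V - M - {v})"
      using ident[unfolded k_identifiable_def, rule_format, of "V - M" "V - M - {v}"]
      by (simp add: card_Diff1_le)
    then show False
      using failed_paths_non_monitors_remove[OF assms(1) _ few] \<open>v \<in> V - M\<close>
      unfolding distinguishable_def by auto
  qed
next
  assume two: "\<forall>v\<in>S. card {m \<in> M. E v m} \<ge> 2"
  show "k_identifiable V E M (card (V - M)) S"
    unfolding k_identifiable_def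
  proof (intro allI impI)
    fix F1 F2 assume F: "F1 \<subseteq> V - M" "F2 \<subseteq> V - M" and "F1 \<inter> S \<noteq> F2 \<inter> S"
    then obtain v where "v \<in> S" and "v \<in> F1 \<and> v \<notin> F2 \<or> v \<in> F2 \<and> v \<notin> F1" by blast
    moreover have "2 \<le> card {m \<in> M. E v m}" "F1 \<inter> M = {}" "F2 \<inter> M = {}"
      using two \<open>v \<in> S\<close> F by auto
    ultimately show "distinguishable (csp_paths V E M) F1 F2"
      using distinguishable_if_two_monitor_neighbours[OF assms(1)] distinguishable_sym
      by metis
  qed
qed

end
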